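(* Let $\tilde\alpha$ be a dual timelike curve and $\tilde\beta$ a dual spacelike curve with dual timelike binormal in the dual Lorentzian space $ID_1^3$ such that $\{\tilde\alpha,\tilde\beta\}$ is a dual timelike - spacelike Mannheim pair, i.e. $\tilde\beta(s^* )=\tilde\alpha(s)+\lambda(s)B(s)$, where $\lambda(s)$ is a dual-number valued function and at corresponding points the dual binormal line of $\tilde\alpha$ coincides with the dual principal normal line of $\tilde\beta$. Then the distance $\|\tilde\beta(s^* )-\tilde\alpha(s)\|$ between corresponding dual points of $\tilde\alpha$ and $\tilde\beta$ is constant.
   Context: Dual numbers: $ID=\{a+\varepsilon a^*: a,a^*\in\mathbb R\}$ with $\varepsilon^2=0$; a differentiable function extends by $f(a+\varepsilon a^* )=f(a)+\varepsilon a^* f'(a)$. $ID^3=\{\vec a+\varepsilon\vec a^*:\vec a,\vec a^*\in\mathbb R^3\}$ with dual Lorentzian inner product $\langle \vec A,\vec B\rangle=\langle\vec a,\vec b\rangle+\varepsilon(\langle\vec a,\vec b^*\rangle+\langle\vec a^*,\vec b\rangle)$, where $\langle\vec a,\vec b\rangle=-a_1b_1+a_2b_2+a_3b_3$; this space is denoted $ID_1^3$. Norm $\|\vec A\|=\sqrt{|\langle\vec A,\vec A\rangle|}=\|\vec a\|+\varepsilon\langle\vec a,\vec a^*\rangle/\|\vec a\|$ for $\vec a\neq0$. $\vec A$ is dual spacelike if $\langle\vec A,\vec A\rangle>0$ or $\vec A=0$, dual timelike if $\langle\vec A,\vec A\rangle<0$. A dual curve $\tilde\alpha=\alpha+\varepsilon\alpha^*$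 is parametrized by dual arc length $s$. For the dual timelike curve $\tilde\alpha$ with Frenet frame $\{T,N,B\}$ ($\langle T,T\rangle=-1$, $\langle N,N\rangle=\langle B,B\rangle=1$, mutually orthogonal): $T'=\kappa N$, $N'=\kappa T+\tau B$, $B'=-\tau N$, with dual curvature $\kappa$ and dual torsion $\tau$. For the dual spacelike curve $\tilde\beta$ with dual timelike binormal, arc length $s^*$, Frenet frame $\{V_1,V_2,V_3\}$ ($\langle V_1,V_1\rangle=\langle V_2,V_2\rangle=1$, $\langle V_3,V_3\rangle=-1$): $V_1'=PV_2$, $V_2'=-PV_1+QV_3$, $V_3'=QV_2$ (derivatives in $s^*$), with dual curvature $P$ and dual torsion $Q$. The pair is a dual timelike - spacelike Mannheim pair if under a correspondence $s\mapsto s^*$ the dual binormal line of $\tilde\alpha$ at $s$ coincides with the dual principal normal line of $\tilde\beta$ at $s^*$ (so $B$ and $V_2$ are linearly dependent). *)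

theory Defs
  imports "HOL-Analysis.Analysis"
begin

text \<open>Dual numbers a + eps a* are modelled as pairs (a, a*) :: real \<times> real;
dual vectors A = a + eps a* in ID^3 as pairs (a, a*) :: (real^3) \<times> (real^3).\<close>

type_synonym dual = "real \<times> real"
type_synonym dvec = "(real^3) \<times> (real^3)"

definition linner :: "real^3 \<Rightarrow> real^3 \<Rightarrow> real" where
  "linner a b = - (a$1 * b$1) + a$2 * b$2 + a$3 * b$3"

definition lnorm :: "real^3 \<Rightarrow> real" where
  "lnorm a = sqrt \<bar>linner a a\<bar>"

text \<open>Dual number multiplication (eps^2 = 0).\<close>
definition dmul :: "dual \<Rightarrow> dual \<Rightarrow> dual" where
  "dmul x y = (fst x * fst y, fst x * snd y + snd x * fst y)"

definition dscale :: "dual \<Rightarrow> dvec \<Rightarrow> dvec" where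
  "dscale x A = (fst x *\<^sub>R fst A, fst x *\<^sub>R snd A + snd x *\<^sub>R fst A)"

definition dinner :: "dvec \<Rightarrow> dvec \<Rightarrow> dual" where
  "dinner A B = (linner (fst A) (fst B), linner (fst A) (snd B) + linner (snd A) (fst B))"

definition dnorm :: "dvec \<Rightarrow> dual" where
  "dnorm A = (lnorm (fst A), linner (fst A) (snd A) / lnorm (fst A))"

text \<open>A dual-valued function of the dual parameter is represented by its restriction
c :: real \<Rightarrow> V \<times> V to real parameter values; it is evaluated at a dual parameter
x = (u, u*) by the extension rule F(u + eps u*) = F(u) + eps u* F'(u), i.e.
real part f(u), dual part f*(u) + u* f'(u).\<close>
definition dext :: "(real \<Rightarrow> 'v::real_normed_vector \<times> 'v) \<Rightarrow> dual \<Rightarrow> 'v \<times> 'v" where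
  "dext c x = (fst (c (fst x)),
               snd (c (fst x)) + snd x *\<^sub>R vector_derivative (\<lambda>u. fst (c u)) (at (fst x)))"

end

theory Submission imports Defs begin

text \<open>Write F = \<beta>(s*) - \<alpha> = \<lambda> B. Since B is a unit spacelike vector, \<lambda> = \<langle>F, B\<rangle>, and
  \<langle>F, B\<rangle>' = \<langle>F', B\<rangle> + \<langle>F, B'\<rangle> vanishes: F' = (s*)' V1(s*) - T is orthogonal to B because
  B is parallel to V2(s*), and \<langle>\<lambda> B, -\<tau> N\<rangle> = 0. Hence \<lambda> is constant, and so is
  \<parallel>F\<parallel> = \<parallel>\<lambda> B\<parallel> = |\<lambda>|. Since the correspondence s* is dual-valued, F' is computed
  with a chain rule and a Leibniz rule for the dual extension of curves.\<close>

lemma linner_add_left: "linner (a + b) c = linner a c + linner b c"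
  and linner_add_right: "linner c (a + b) = linner c a + linner c b"
  and linner_scaleR_left: "linner (r *\<^sub>R a) c = r * linner a c"
  and linner_scaleR_right: "linner c (r *\<^sub>R a) = r * linner c a"
  and linner_minus_left: "linner (- a) c = - linner a c"
  and linner_minus_right: "linner c (- a) = - linner c a"
  and linner_diff_left: "linner (a - b) c = linner a c - linner b c"
  and linner_diff_right: "linner c (a - b) = linner c a - linner c b"
  and linner_commute: "linner a c = linner c a"
  by (simp_all add: linner_def algebra_simps)

lemmas linner_simps = linner_add_left linner_add_right linner_scaleR_left linner_scaleR_right
  linner_minus_left linner_minus_right linner_diff_left linner_diff_right

lemma bounded_bilinear_dinner: "bounded_bilinear dinner"
  by (auto intro!: linearI simp: bilinear_conv_bounded_bilinear[symmetric] bilinear_def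
      dinner_def linner_simps algebra_simps)

lemma dinner_commute: "dinner X Y = dinner Y X"
  and dinner_dscale_left: "dinner (dscale a X) Y = dmul a (dinner X Y)"
  and dinner_dscale_right: "dinner X (dscale a Y) = dmul a (dinner X Y)"
  and dinner_minus_right: "dinner X (- Y) = - dinner X Y"
  and dinner_diff_left: "dinner (X - Y) Z = dinner X Z - dinner Y Z"
  by (auto simp: dinner_def dscale_def dmul_def linner_simps algebra_simps linner_commute)

lemma dmul_zero_right [simp]: "dmul a 0 = 0"
  by (simp add: dmul_def zero_prod_def)

lemma dinner_dscale_unit:
  assumes "dinner B B = (1, 0)"
  shows "dinner (dscale l B) B = l"
  using assms by (simp add: dinner_dscale_left dmul_def)

lemma dnorm_dscale_unit:
  assumes "dinner B B = (1, 0)"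
  shows "dnorm (dscale l B) = (\<bar>fst l\<bar>, fst l * snd l / \<bar>fst l\<bar>)"
proof -
  have "linner (fst B) (fst B) = 1" "linner (fst B) (snd B) = 0"
    using assms by (auto simp: dinner_def linner_commute[of "snd B"])
  then show ?thesis
    by (simp add: dnorm_def dscale_def lnorm_def linner_simps algebra_simps
        flip: power2_eq_square)
qed

lemma dext_eq:
  assumes "(c has_vector_derivative c') (at (fst x))"
  shows "dext c x = (fst (c (fst x)), snd (c (fst x)) + snd x *\<^sub>R fst c')"
  using bounded_linear.has_vector_derivative[OF bounded_linear_fst assms]
  by (simp add: dext_def vector_derivative_at)

lemma dext_constant_on_open:
  assumes "open J" "fst x \<in> J" "\<And>u. u \<in> J \<Longrightarrow> c u = k"
  shows "dext c x = k"
proof -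
  have "(c has_vector_derivative 0) (at (fst x))"
    by (rule has_vector_derivative_transform_within_open[OF _ assms(1,2)])
       (use assms(3) in auto)
  then show ?thesis
    using assms by (simp add: dext_eq)
qed

text \<open>The dual part of dext c involves dc/du, so the dual chain rule needs the second
  derivative c''.\<close>
lemma has_vector_derivative_dext_comp:
  fixes c :: "real \<Rightarrow> dvec"
  assumes I: "open I" "s \<in> I" and \<sigma>J: "\<And>x. x \<in> I \<Longrightarrow> fst (\<sigma> x) \<in> J"
    and \<sigma>': "(\<sigma> has_vector_derivative \<sigma>') (at s)"
    and c': "\<And>u. u \<in> J \<Longrightarrow> (c has_vector_derivative c' u) (at u)"
    and c'': "(c' has_vector_derivative c'') (at (fst (\<sigma> s)))"
  shows "((\<lambda>x. dext c (\<sigma> x)) has_vector_derivative dscale \<sigma>' (dext c' (\<sigma> s))) (at s)"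
proof -
  let ?r = "\<lambda>x. fst (\<sigma> x)" and ?d = "\<lambda>x. snd (\<sigma> x)"
  have r': "(?r has_vector_derivative fst \<sigma>') (at s)"
    and d': "(?d has_real_derivative snd \<sigma>') (at s)"
    using bounded_linear.has_vector_derivative[OF bounded_linear_fst \<sigma>']
      bounded_linear.has_vector_derivative[OF bounded_linear_snd \<sigma>']
    by (simp_all add: has_real_derivative_iff_has_vector_derivative)
  have chain: "((\<lambda>x. h (f (?r x))) has_vector_derivative fst \<sigma>' *\<^sub>R h f') (at s)"
    if "(f has_vector_derivative f') (at (?r s))" "bounded_linear h" for f f' and h :: "dvec \<Rightarrow> real^3"
    using vector_diff_chain_at[OF r' bounded_linear.has_vector_derivative[OF that(2,1)]]
    by (simp add: o_def)
  let ?g = "\<lambda>x. (fst (c (?r x)), snd (c (?r x)) + ?d x *\<^sub>R fst (c' (?r x)))"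
  have c'_r: "(c has_vector_derivative c' (?r s)) (at (?r s))"
    using c' \<sigma>J I(2) by blast
  have "(?g has_vector_derivative
          (fst \<sigma>' *\<^sub>R fst (c' (?r s)),
           fst \<sigma>' *\<^sub>R snd (c' (?r s)) + (?d s *\<^sub>R (fst \<sigma>' *\<^sub>R fst c'') + snd \<sigma>' *\<^sub>R fst (c' (?r s)))))
        (at s)"
    by (intro has_vector_derivative_Pair has_vector_derivative_add has_vector_derivative_scaleR d'
        chain[OF c'_r bounded_linear_fst] chain[OF c'_r bounded_linear_snd] chain[OF c'' bounded_linear_fst])
  also have "(fst \<sigma>' *\<^sub>R fst (c' (?r s)),
           fst \<sigma>' *\<^sub>R snd (c' (?r s)) + (?d s *\<^sub>R (fst \<sigma>' *\<^sub>R fst c'') + snd \<sigma>' *\<^sub>R fst (c' (?r s))))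
      = dscale \<sigma>' (dext c' (\<sigma> s))"
    by (simp add: dext_eq[OF c''] dscale_def algebra_simps)
  finally show ?thesis
    by (rule has_vector_derivative_transform_within_open[OF _ I]) (simp add: dext_eq[OF c'[OF \<sigma>J]])
qed

lemma dinner_dext:
  assumes "(X has_vector_derivative X') (at (fst x))" "(Y has_vector_derivative Y') (at (fst x))"
  shows "dinner (dext X x) (dext Y x) = dext (\<lambda>u. dinner (X u) (Y u)) x"
proof -
  have "((\<lambda>u. dinner (X u) (Y u)) has_vector_derivative dinner (X (fst x)) Y' + dinner X' (Y (fst x)))
          (at (fst x))"
    by (rule bounded_bilinear.has_vector_derivative[OF bounded_bilinear_dinner assms])
  then show ?thesis
    using assms by (simp add: dext_eq dinner_def linner_simps algebra_simps)
qed

lemma dinner_dext_orthogonal: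
  assumes "open J" "fst x \<in> J" "\<And>u. u \<in> J \<Longrightarrow> dinner (X u) (Y u) = 0"
    and "(X has_vector_derivative X') (at (fst x))" "(Y has_vector_derivative Y') (at (fst x))"
  shows "dinner (dext X x) (dext Y x) = 0"
  using assms by (simp add: dinner_dext dext_constant_on_open)

lemma has_vector_derivative_zero_constant_on:
  fixes f :: "real \<Rightarrow> 'b::banach"
  assumes "connected S" "open S" "\<And>x. x \<in> S \<Longrightarrow> (f has_vector_derivative 0) (at x)"
  shows "f constant_on S"
proof (rule has_derivative_zero_connected_constant_on[where K="{}"])
  show "continuous_on S f"
    using assms(3) by (meson continuous_at_imp_continuous_on has_vector_derivative_continuous)
  show "\<forall>x\<in>S - {}. (f has_derivative (\<lambda>h. 0)) (at x within S)"
    using assms(3) by (auto simp: has_vector_derivative_def intro: has_derivative_at_withinI)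
qed (use assms in auto)

lemma constant_dnorm_along_unit_field:
  assumes "connected I" "open I"
    and F: "\<And>s. s \<in> I \<Longrightarrow> F s = dscale (lam s) (B s)"
    and unit: "\<And>s. s \<in> I \<Longrightarrow> dinner (B s) (B s) = (1, 0)"
    and deriv: "\<And>s. s \<in> I \<Longrightarrow> ((\<lambda>s. dinner (F s) (B s)) has_vector_derivative 0) (at s)"
  shows "\<exists>c. \<forall>s\<in>I. dnorm (F s) = c"
proof -
  from has_vector_derivative_zero_constant_on[OF assms(1,2) deriv]
  obtain c where c: "\<And>s. s \<in> I \<Longrightarrow> dinner (F s) (B s) = c"
    unfolding constant_on_def by blast
  have "F s = dscale c (B s)" if "s \<in> I" for s
    using c[OF that] dinner_dscale_unit[OF unit[OF that], of "lam s"] F[OF that] by simp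
  then have "dnorm (F s) = (\<bar>fst c\<bar>, fst c * snd c / \<bar>fst c\<bar>)" if "s \<in> I" for s
    using dnorm_dscale_unit[OF unit[OF that]] that by simp
  then show ?thesis
    by blast
qed

theorem theorem3p1:
  fixes I J :: "real set"
    and \<alpha> T N B :: "real \<Rightarrow> dvec" and \<kappa> \<tau> :: "real \<Rightarrow> dual"
    and \<beta> V1 V2 V3 :: "real \<Rightarrow> dvec" and P Q :: "real \<Rightarrow> dual"
    and sstar :: "real \<Rightarrow> dual" and lam :: "real \<Rightarrow> dual"
  assumes I: "open I" "connected I"
    and J: "open J"
    \<comment> \<open>dual timelike curve \<alpha> parametrized by dual arc length s, with Frenet frame\<close>
    and alpha_T: "\<And>s. s \<in> I \<Longrightarrow> (\<alpha> has_vector_derivative T s) (at s)"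
    and frameA: "\<And>s. s \<in> I \<Longrightarrow> dinner (T s) (T s) = (-1, 0) \<and> dinner (N s) (N s) = (1, 0)
                 \<and> dinner (B s) (B s) = (1, 0) \<and> dinner (T s) (N s) = (0, 0)
                 \<and> dinner (T s) (B s) = (0, 0) \<and> dinner (N s) (B s) = (0, 0)"
    and frenetA: "\<And>s. s \<in> I \<Longrightarrow>
                 (T has_vector_derivative dscale (\<kappa> s) (N s)) (at s)
               \<and> (N has_vector_derivative dscale (\<kappa> s) (T s) + dscale (\<tau> s) (B s)) (at s)
               \<and> (B has_vector_derivative - dscale (\<tau> s) (N s)) (at s)"
    \<comment> \<open>dual spacelike curve \<beta> with dual timelike binormal, parametrized by dual arc length s*\<close>
    and beta_V1: "\<And>u. u \<in> J \<Longrightarrow> (\<beta> has_vector_derivative V1 u) (at u)"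
    and frameB: "\<And>u. u \<in> J \<Longrightarrow> dinner (V1 u) (V1 u) = (1, 0) \<and> dinner (V2 u) (V2 u) = (1, 0)
                 \<and> dinner (V3 u) (V3 u) = (-1, 0) \<and> dinner (V1 u) (V2 u) = (0, 0)
                 \<and> dinner (V1 u) (V3 u) = (0, 0) \<and> dinner (V2 u) (V3 u) = (0, 0)"
    and frenetB: "\<And>u. u \<in> J \<Longrightarrow>
                 (V1 has_vector_derivative dscale (P u) (V2 u)) (at u)
               \<and> (V2 has_vector_derivative - dscale (P u) (V1 u) + dscale (Q u) (V3 u)) (at u)
               \<and> (V3 has_vector_derivative dscale (Q u) (V2 u)) (at u)"
    \<comment> \<open>correspondence s \<mapsto> s* (dual-valued, differentiable)\<close>
    and corr: "\<And>s. s \<in> I \<Longrightarrow> fst (sstar s) \<in> J \<and> sstar differentiable (at s)"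
    \<comment> \<open>Mannheim pair: beta(s*) = alpha(s) + lambda(s) B(s), and B(s) lies on the
        dual principal normal line of beta at s*\<close>
    and mannheim: "\<And>s. s \<in> I \<Longrightarrow> dext \<beta> (sstar s) = \<alpha> s + dscale (lam s) (B s)"
    and lines: "\<And>s. s \<in> I \<Longrightarrow> \<exists>\<mu>. B s = dscale \<mu> (dext V2 (sstar s))"
  shows "\<exists>c. \<forall>s\<in>I. dnorm (dext \<beta> (sstar s) - \<alpha> s) = c"
proof -
  define F where "F s = dext \<beta> (sstar s) - \<alpha> s" for s
  have F_eq: "F s = dscale (lam s) (B s)" if "s \<in> I" for s
    using mannheim[OF that] by (simp add: F_def)
  have "((\<lambda>s. dinner (F s) (B s)) has_vector_derivative 0) (at s)" if s: "s \<in> I" for s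
  proof -
    obtain \<sigma>' where \<sigma>': "(sstar has_vector_derivative \<sigma>') (at s)"
      using vector_derivative_works[THEN iffD1, OF conjunct2[OF corr[OF s]]] by blast
    have J_corr: "\<And>x. x \<in> I \<Longrightarrow> fst (sstar x) \<in> J"
      using corr by blast
    note V1' = conjunct1[OF frenetB[OF J_corr[OF s]]]
    note V2' = conjunct1[OF conjunct2[OF frenetB[OF J_corr[OF s]]]]
    have "(F has_vector_derivative dscale \<sigma>' (dext V1 (sstar s)) - T s) (at s)"
      unfolding F_def[abs_def]
      by (intro has_vector_derivative_diff alpha_T[OF s]
          has_vector_derivative_dext_comp[OF I(1) s J_corr \<sigma>' beta_V1 V1'])
    from bounded_bilinear.has_vector_derivative[OF bounded_bilinear_dinner this
        conjunct2[OF conjunct2[OF frenetA[OF s]]]]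
    have deriv: "((\<lambda>s. dinner (F s) (B s)) has_vector_derivative
        dinner (F s) (- dscale (\<tau> s) (N s)) + dinner (dscale \<sigma>' (dext V1 (sstar s)) - T s) (B s))
        (at s)" .
    have V1_V2: "dinner (dext V1 (sstar s)) (dext V2 (sstar s)) = 0"
      using frameB by (intro dinner_dext_orthogonal[OF J J_corr[OF s] _ V1' V2']) (simp add: zero_prod_def)
    obtain \<mu> where "B s = dscale \<mu> (dext V2 (sstar s))"
      using lines[OF s] by blast
    then have "dinner (dext V1 (sstar s)) (B s) = 0"
      by (simp add: dinner_dscale_right V1_V2)
    moreover have "dinner (B s) (N s) = 0" "dinner (T s) (B s) = 0"
      using frameA[OF s] by (simp_all add: dinner_commute[of "B s" "N s"] zero_prod_def)
    ultimately show ?thesis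
      using deriv by (simp add: F_eq[OF s] dinner_diff_left dinner_dscale_left dinner_dscale_right
          dinner_minus_right)
  qed
  from constant_dnorm_along_unit_field[OF I(2,1) F_eq _ this] show ?thesis
    using frameA unfolding F_def by simp
qed

end
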